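(* Assume $r$ is not a codeword of the GRS code (equivalently $\deg R\ge k$). Let $B\in\mathbb F_q[X]^{(\ell+1)\times(\ell+1)}$ represent a basis of $M_{s,\ell}$ such that $BW_\ell$ is in weak Popov form. Let $C^{\mathrm I}$ be the $(\ell+2)\times(\ell+2)$ matrix whose first $\ell+1$ rows are the rows of $B$ each extended by a final zero entry, and whose last row is the coefficient vector (of length $\ell+2$) of $Y^{\ell-s+1}(Y-R(X))^s$. Then $\Delta(C^{\mathrm I}W_{\ell+1})=s(\deg R-k+1)\le s(n-k)$.
   Context: Let $\mathbb F_q$ be a finite field, $1\le k<n<q$, $\alpha_0,\dots,\alpha_{n-1}$ distinct nonzero elements of $\mathbb F_q$, $w_0,\dots,w_{n-1}$ nonzero elements of $\mathbb F_q$. The GRS code is $\{(w_0f(\alpha_0),\dots,w_{n-1}f(\alpha_{n-1})): f\in\mathbb F_q[X],\deg f<k\}$. Let $r\in\mathbb F_q^n$, $r_i'=r_i/w_i$, and $R$ the unique polynomial of degree $<n$ with $R(\alpha_i)=r_i'$. For positive integers $s\le\ell$, $M_{s,\ell}$ is the $\mathbb F_q[X]$-module of all $Q\in\mathbb F_q[X,Y]$ of $Y$-degree at most $\ell$ such that for each $i$, $Q(X+\alpha_i,Y+r_i')$ has no monomials of total degree less than $s$. A polynomial $\sum_{t}Q_t(X)Y^t$ has coefficient vector $(Q_0,Q_1,\dots)$; a matrix represents a basis if its rows are the coefficient vectors of the basis elements. $W_\ell=\mathrm{diag}(1,X^{k-1},\dots,X^{\ell(k-1)})$. For $v\in\mathbb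 F_q[X]^m$, $\deg v=\max_i\deg v_i$, $\mathrm{LP}(v)=\max\{i:\deg v_i=\deg v\}$; a matrix is in weak Popov form if its rows have pairwise different leading positions. For a square matrix $V$ with rows $v_i$, $\deg V=\sum_i\deg v_i$ and $\Delta(V)=\deg V-\deg\det V$. *)

theory Defs
  imports "Jordan_Normal_Form.Determinant" "HOL-Computational_Algebra.Polynomial"
begin

text \<open>Bivariate polynomials Q(X,Y) = sum_t Q_t(X) Y^t are represented as
  'a poly poly: the outer variable is Y, the coefficients are polynomials in X.\<close>

definition shift_XY :: "'a::comm_ring_1 \<Rightarrow> 'a \<Rightarrow> 'a poly poly \<Rightarrow> 'a poly poly" where
  "shift_XY a b Q = map_poly (\<lambda>p. pcompose p [:a, 1:]) (pcompose Q [:[:b:], 1:])"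
  \<comment> \<open>Q(X + a, Y + b)\<close>

definition no_low_monomials :: "nat \<Rightarrow> 'a::comm_ring_1 poly poly \<Rightarrow> bool" where
  "no_low_monomials s Q \<longleftrightarrow> (\<forall>i j. i + j < s \<longrightarrow> coeff (coeff Q j) i = 0)"

definition M_module ::
  "nat \<Rightarrow> nat \<Rightarrow> nat \<Rightarrow> (nat \<Rightarrow> 'a::field) \<Rightarrow> (nat \<Rightarrow> 'a) \<Rightarrow> 'a poly poly set" where
  "M_module n s l alpha r' = {Q. degree Q \<le> l \<and>
       (\<forall>i<n. no_low_monomials s (shift_XY (alpha i) (r' i) Q))}"

definition vec_to_bpoly :: "'a::comm_ring_1 poly vec \<Rightarrow> 'a poly poly" where
  "vec_to_bpoly v = (\<Sum>j<dim_vec v. monom (v $ j) j)"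

definition coeff_vec :: "nat \<Rightarrow> 'a::zero poly \<Rightarrow> 'a vec" where
  "coeff_vec m Q = vec m (\<lambda>j. coeff Q j)"

definition represents_basis :: "'a::field poly mat \<Rightarrow> 'a poly poly set \<Rightarrow> bool" where
  "represents_basis B M \<longleftrightarrow>
     (\<forall>i<dim_row B. vec_to_bpoly (row B i) \<in> M) \<and>
     (\<forall>Q\<in>M. \<exists>!c. dim_vec c = dim_row B \<and>
                Q = (\<Sum>i<dim_row B. smult (c $ i) (vec_to_bpoly (row B i))))"

definition W_mat :: "nat \<Rightarrow> nat \<Rightarrow> 'a::comm_ring_1 poly mat" where
  "W_mat k l = mat (l+1) (l+1) (\<lambda>(i,j). if i = j then monom 1 (i * (k - 1)) else 0)"

definition vdeg :: "'a::zero poly vec \<Rightarrow> nat" where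
  "vdeg v = (if \<exists>i<dim_vec v. v $ i \<noteq> 0
             then Max {degree (v $ i) | i. i < dim_vec v \<and> v $ i \<noteq> 0} else 0)"

definition LP :: "'a::zero poly vec \<Rightarrow> nat" where
  "LP v = Max {i. i < dim_vec v \<and> v $ i \<noteq> 0 \<and> degree (v $ i) = vdeg v}"

definition weak_popov :: "'a::zero poly mat \<Rightarrow> bool" where
  "weak_popov V \<longleftrightarrow> (\<forall>i<dim_row V. \<forall>j<dim_row V. i \<noteq> j \<longrightarrow> LP (row V i) \<noteq> LP (row V j))"

definition mat_deg :: "'a::zero poly mat \<Rightarrow> nat" where
  "mat_deg V = (\<Sum>i<dim_row V. vdeg (row V i))"

definition Delta :: "'a::comm_ring_1 poly mat \<Rightarrow> int" where
  "Delta V = int (mat_deg V) - int (degree (det V))"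

definition C_I :: "'a::comm_ring_1 poly mat \<Rightarrow> nat \<Rightarrow> nat \<Rightarrow> 'a poly \<Rightarrow> 'a poly mat" where
  "C_I B l s R = mat (l+2) (l+2) (\<lambda>(i,j).
      if i \<le> l then (if j \<le> l then B $$ (i,j) else 0)
      else coeff_vec (l+2) (monom 1 (l - s + 1) * [:-R, 1:] ^ s) $ j)"

end

theory Submission
  imports Defs
begin

text \<open>Since B W is in weak Popov form and has no zero row, the leading positions of its rows
  form a permutation, and in the Leibniz expansion of det (B W) only the term of that permutation
  reaches the degree deg (B W), the sum of the row degrees; hence Delta (B W) = 0. In
  C^I W' (W' = W_(l+1)) the last column vanishes except for the corner X^((l+1)(k-1)), so
  det (C^I W') = X^((l+1)(k-1)) det (B W). The first l+1 row degrees do not change, and the last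
  row, the weighted coefficient vector of Y^(l-s+1) (Y - R)^s, has degree
  s deg R + (l-s+1)(k-1). Subtracting gives Delta (C^I W') = s (deg R - k + 1). Of the
  hypotheses, the basis property only serves to exclude zero rows of B, and the fact that r is no
  codeword gives deg R \<ge> k.\<close>

lemma coeff_mult_at_degree_bounds:
  fixes p q :: "'a::comm_semiring_1 poly"
  assumes "degree p \<le> a" "degree q \<le> b"
  shows "coeff (p * q) (a + b) = coeff p a * coeff q b"
proof -
  have "coeff (p * q) (a + b) = (\<Sum>i\<le>a + b. coeff p i * coeff q (a + b - i))"
    by (rule coeff_mult)
  also have "\<dots> = coeff p a * coeff q (a + b - a)"
  proof (rule sum.mono_neutral_right[where S = "{a}", simplified])
    show "\<forall>i\<in>{..a + b} - {a}. coeff p i * coeff q (a + b - i) = 0"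
    proof
      fix i assume "i \<in> {..a + b} - {a}"
      then consider "i < a" | "a < i" by fastforce
      then show "coeff p i * coeff q (a + b - i) = 0"
        by cases (use assms in \<open>auto simp: coeff_eq_0\<close>)
    qed
  qed auto
  finally show ?thesis by simp
qed

lemma degree_prod_le_sum:
  fixes f :: "'b \<Rightarrow> 'a::comm_semiring_1 poly"
  assumes "finite S" "\<And>i. i \<in> S \<Longrightarrow> degree (f i) \<le> d i"
  shows "degree (prod f S) \<le> sum d S"
  using degree_prod_sum_le[OF assms(1), of f] sum_mono[of S "degree \<circ> f" d] assms(2)
  by fastforce

lemma coeff_prod_at_degree_bounds:
  fixes f :: "'b \<Rightarrow> 'a::comm_semiring_1 poly"
  assumes "finite S" "\<And>i. i \<in> S \<Longrightarrow> degree (f i) \<le> d i"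
  shows "coeff (prod f S) (sum d S) = (\<Prod>i\<in>S. coeff (f i) (d i))"
  using assms
proof (induction S rule: finite_induct)
  case (insert x F)
  then have "coeff (f x * prod f F) (d x + sum d F) = coeff (f x) (d x) * coeff (prod f F) (sum d F)"
    by (intro coeff_mult_at_degree_bounds degree_prod_le_sum) auto
  with insert show ?case by simp
qed simp

lemma degree_le_vdeg:
  fixes v :: "'a::zero poly vec"
  assumes "j < dim_vec v"
  shows "degree (v $ j) \<le> vdeg v"
proof (cases "v $ j = 0")
  case False
  then show ?thesis
    using assms unfolding vdeg_def by (auto intro!: Max_ge)
qed simp

lemma LP_is_leading:
  fixes v :: "'a::zero poly vec"
  assumes "\<exists>i<dim_vec v. v $ i \<noteq> 0"
  shows "LP v < dim_vec v" "v $ LP v \<noteq> 0" "degree (v $ LP v) = vdeg v"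
proof -
  let ?D = "{degree (v $ i) | i. i < dim_vec v \<and> v $ i \<noteq> 0}"
  let ?L = "{i. i < dim_vec v \<and> v $ i \<noteq> 0 \<and> degree (v $ i) = vdeg v}"
  have "vdeg v = Max ?D" using assms unfolding vdeg_def by simp
  moreover have "Max ?D \<in> ?D" using assms by (intro Max_in) auto
  ultimately have "?L \<noteq> {}" by auto
  then have "LP v \<in> ?L" unfolding LP_def by (intro Max_in) auto
  then show "LP v < dim_vec v" "v $ LP v \<noteq> 0" "degree (v $ LP v) = vdeg v" by auto
qed

lemma le_LP:
  fixes v :: "'a::zero poly vec"
  assumes "j < dim_vec v" "v $ j \<noteq> 0" "degree (v $ j) = vdeg v"
  shows "j \<le> LP v"
  using assms unfolding LP_def by (auto intro!: Max_ge)

lemma vdeg_eqI: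
  fixes v :: "'a::zero poly vec"
  assumes "\<And>j. j < dim_vec v \<Longrightarrow> degree (v $ j) \<le> d"
    and "j0 < dim_vec v" "v $ j0 \<noteq> 0" "degree (v $ j0) = d"
  shows "vdeg v = d"
proof -
  have "vdeg v = Max {degree (v $ i) | i. i < dim_vec v \<and> v $ i \<noteq> 0}"
    using assms unfolding vdeg_def by auto
  also have "\<dots> = d"
    by (rule Max_eqI) (use assms in auto)
  finally show ?thesis .
qed

lemma vdeg_extend_zero:
  fixes u v :: "'a::zero poly vec"
  assumes "dim_vec v \<le> dim_vec u" "\<And>j. j < dim_vec v \<Longrightarrow> u $ j = v $ j"
    and "\<And>j. dim_vec v \<le> j \<Longrightarrow> j < dim_vec u \<Longrightarrow> u $ j = 0"
  shows "vdeg u = vdeg v"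
proof -
  have nz: "i < dim_vec u \<and> u $ i \<noteq> 0 \<longleftrightarrow> i < dim_vec v \<and> v $ i \<noteq> 0" for i
    using assms by (metis not_le order_less_le_trans)
  then have "{degree (u $ i) | i. i < dim_vec u \<and> u $ i \<noteq> 0}
    = {degree (v $ i) | i. i < dim_vec v \<and> v $ i \<noteq> 0}"
    using assms(2) by metis
  moreover have "(\<exists>i<dim_vec u. u $ i \<noteq> 0) \<longleftrightarrow> (\<exists>i<dim_vec v. v $ i \<noteq> 0)"
    using nz by blast
  ultimately show ?thesis
    unfolding vdeg_def by (simp only:)
qed

lemma permutes_le_imp_eq:
  assumes p: "p permutes {0..<m::nat}" and q: "q permutes {0..<m}"
    and le: "\<And>i. i < m \<Longrightarrow> p i \<le> q i"
  shows "p = q"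
proof -
  have "sum p {0..<m} = sum q {0..<m}"
    using sum.permute[OF p, of id] sum.permute[OF q, of id] by simp
  then have "\<forall>i<m. p i = q i"
    using sum_strict_mono_ex1[of "{0..<m}" p q] le
    by (metis atLeastLessThan_iff finite_atLeastLessThan le_neq_implies_less zero_le less_irrefl)
  moreover have "\<And>i. m \<le> i \<Longrightarrow> p i = i \<and> q i = i"
    using p q by (auto intro!: permutes_not_in)
  ultimately show ?thesis by (metis not_le ext)
qed

definition LP_perm :: "'a::zero poly mat \<Rightarrow> nat \<Rightarrow> nat" where
  "LP_perm V i = (if i < dim_row V then LP (row V i) else i)"

lemma LP_perm_permutes:
  fixes V :: "'a::zero poly mat"
  assumes V: "V \<in> carrier_mat m m" and wp: "weak_popov V"
    and nz: "\<And>i. i < m \<Longrightarrow> \<exists>j<m. V $$ (i, j) \<noteq> 0"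
  shows "LP_perm V permutes {0..<m}"
proof (rule bij_imp_permutes)
  have "LP (row V i) < m" if i: "i < m" for i
  proof -
    obtain j where "j < m" "V $$ (i, j) \<noteq> 0" using nz[OF i] by blast
    then have "\<exists>j<dim_vec (row V i). row V i $ j \<noteq> 0" using V i by auto
    then show ?thesis using LP_is_leading(1)[of "row V i"] V by simp
  qed
  then have img: "LP_perm V ` {0..<m} \<subseteq> {0..<m}"
    using V by (auto simp: LP_perm_def)
  have inj: "inj_on (LP_perm V) {0..<m}"
    using wp V unfolding weak_popov_def inj_on_def LP_perm_def by (auto, metis)
  show "bij_betw (LP_perm V) {0..<m} {0..<m}"
    using endo_inj_surj[OF _ img inj] inj by (simp add: bij_betw_def)
  show "LP_perm V i = i" if "i \<notin> {0..<m}" for i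
    using that V by (simp add: LP_perm_def)
qed

lemma mat_deg_eq_sum_vdeg:
  assumes "V \<in> carrier_mat m m"
  shows "mat_deg V = (\<Sum>i = 0..<m. vdeg (row V i))"
  using assms by (simp add: mat_deg_def atLeast0LessThan)

lemma degree_det_term_le_mat_deg:
  fixes V :: "'a::comm_semiring_1 poly mat"
  assumes V: "V \<in> carrier_mat m m" and p: "p permutes {0..<m}"
  shows "degree (\<Prod>i = 0..<m. V $$ (i, p i)) \<le> mat_deg V"
    and "coeff (\<Prod>i = 0..<m. V $$ (i, p i)) (mat_deg V)
      = (\<Prod>i = 0..<m. coeff (V $$ (i, p i)) (vdeg (row V i)))"
proof -
  have "degree (V $$ (i, p i)) \<le> vdeg (row V i)" if "i \<in> {0..<m}" for i
    using degree_le_vdeg[of "p i" "row V i"] permutes_in_image[OF p] V that by auto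
  then show "degree (\<Prod>i = 0..<m. V $$ (i, p i)) \<le> mat_deg V"
    and "coeff (\<Prod>i = 0..<m. V $$ (i, p i)) (mat_deg V)
      = (\<Prod>i = 0..<m. coeff (V $$ (i, p i)) (vdeg (row V i)))"
    unfolding mat_deg_eq_sum_vdeg[OF V]
    by (intro degree_prod_le_sum coeff_prod_at_degree_bounds; simp)+
qed

lemma prod_coeff_vdeg_eq_0:
  fixes V :: "'a::comm_semiring_1 poly mat"
  assumes V: "V \<in> carrier_mat m m" and wp: "weak_popov V"
    and nz: "\<And>i. i < m \<Longrightarrow> \<exists>j<m. V $$ (i, j) \<noteq> 0"
    and p: "p permutes {0..<m}" and ne: "p \<noteq> LP_perm V"
  shows "(\<Prod>i = 0..<m. coeff (V $$ (i, p i)) (vdeg (row V i))) = 0"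
proof (rule ccontr)
  assume prod: "(\<Prod>i = 0..<m. coeff (V $$ (i, p i)) (vdeg (row V i))) \<noteq> 0"
  have c: "coeff (V $$ (i, p i)) (vdeg (row V i)) \<noteq> 0" if "i < m" for i
    using prod prod_zero[of "{0..<m}"] that by fastforce
  have "p i \<le> LP_perm V i" if i: "i < m" for i
  proof -
    have pi: "p i < m" using permutes_in_image[OF p] i by auto
    have "vdeg (row V i) \<le> degree (V $$ (i, p i))"
      using c[OF i] le_degree by blast
    moreover have "degree (V $$ (i, p i)) \<le> vdeg (row V i)"
      using degree_le_vdeg[of "p i" "row V i"] V i pi by simp
    ultimately show ?thesis
      using le_LP[of "p i" "row V i"] c[OF i] V i pi by (auto simp: LP_perm_def)
  qed
  with permutes_le_imp_eq[OF p LP_perm_permutes[OF V wp nz]] ne show False by blast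
qed

lemma lead_coeff_LP_perm_nonzero:
  fixes V :: "'a::zero poly mat"
  assumes V: "V \<in> carrier_mat m m" and i: "i < m" and nz: "\<exists>j<m. V $$ (i, j) \<noteq> 0"
  shows "coeff (V $$ (i, LP_perm V i)) (vdeg (row V i)) \<noteq> 0"
proof -
  have "\<exists>j<dim_vec (row V i). row V i $ j \<noteq> 0" using nz V i by auto
  from LP_is_leading[OF this] show ?thesis
    using V i leading_coeff_0_iff[of "V $$ (i, LP (row V i))"] by (auto simp: LP_perm_def)
qed

theorem degree_det_weak_popov:
  fixes V :: "'a::idom poly mat"
  assumes V: "V \<in> carrier_mat m m" and wp: "weak_popov V"
    and nz: "\<And>i. i < m \<Longrightarrow> \<exists>j<m. V $$ (i, j) \<noteq> 0"
  shows "det V \<noteq> 0" "degree (det V) = mat_deg V"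
proof -
  define T where "T p = signof p * (\<Prod>i = 0..<m. V $$ (i, p i))" for p
  define top where "top p = (\<Prod>i = 0..<m. coeff (V $$ (i, p i)) (vdeg (row V i)))" for p
  have pi: "LP_perm V permutes {0..<m}" by (rule LP_perm_permutes[OF V wp nz])
  have T_smult: "T p = smult (signof p) (\<Prod>i = 0..<m. V $$ (i, p i))" for p
    by (simp add: T_def of_int_poly)
  have deg_T: "degree (T p) \<le> mat_deg V" if "p permutes {0..<m}" for p
    using degree_det_term_le_mat_deg(1)[OF V that] degree_smult_le order_trans
    unfolding T_smult by blast
  have coeff_T: "coeff (T p) (mat_deg V) = signof p * top p" if "p permutes {0..<m}" for p
    using degree_det_term_le_mat_deg(2)[OF V that] by (simp add: T_smult top_def)
  have "coeff (det V) (mat_deg V) = (\<Sum>p\<in>{p. p permutes {0..<m}}. coeff (T p) (mat_deg V))"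
    unfolding det_def'[OF V] T_def coeff_sum ..
  also have "\<dots> = coeff (T (LP_perm V)) (mat_deg V)"
    using prod_coeff_vdeg_eq_0[OF V wp nz] pi finite_permutations
    by (intro sum.mono_neutral_right[where S = "{LP_perm V}", simplified]) (auto simp: coeff_T top_def)
  also have "\<dots> \<noteq> 0"
    using lead_coeff_LP_perm_nonzero[OF V _ nz] by (simp add: coeff_T[OF pi] top_def sign_def)
  finally have top_nz: "coeff (det V) (mat_deg V) \<noteq> 0" .
  then show "det V \<noteq> 0" by auto
  have "degree (det V) \<le> mat_deg V"
    unfolding det_def'[OF V] using deg_T finite_permutations
    by (intro degree_sum_le) (auto simp: T_def)
  with top_nz show "degree (det V) = mat_deg V"
    using le_degree by (metis le_antisym)
qed

lemma dim_W_mat [simp]: "dim_row (W_mat k l) = l + 1" "dim_col (W_mat k l) = l + 1"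
  by (simp_all add: W_mat_def)

lemma W_mat_carrier: "W_mat k l \<in> carrier_mat (l+1) (l+1)"
  unfolding carrier_mat_def by simp

lemma index_mult_W_mat:
  fixes A :: "'a::comm_ring_1 poly mat"
  assumes A: "A \<in> carrier_mat r (l+1)" and i: "i < r" and j: "j < l+1"
  shows "(A * W_mat k l) $$ (i, j) = A $$ (i, j) * monom 1 (j * (k - 1))"
proof -
  have "(A * W_mat k l) $$ (i, j) = row A i \<bullet> col (W_mat k l) j"
    using carrier_matD[OF A] i j by (intro index_mult_mat(1)) auto
  also have "\<dots> = (\<Sum>t\<in>{0..<l+1}. A $$ (i, t) * W_mat k l $$ (t, j))"
    unfolding scalar_prod_def using carrier_matD[OF A] i j by (intro sum.cong) auto
  also have "\<dots> = A $$ (i, j) * W_mat k l $$ (j, j)"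
    using j by (subst sum.remove[of _ j]) (auto simp: W_mat_def intro!: sum.neutral)
  also have "\<dots> = A $$ (i, j) * monom 1 (j * (k - 1))"
    using j by (simp add: W_mat_def)
  finally show ?thesis .
qed

lemma degree_coeff_linear_power_le:
  fixes R :: "'a::comm_ring_1 poly"
  shows "degree (coeff ([:-R, 1:] ^ s) j) \<le> (s - j) * degree R"
proof (cases "j \<le> s")
  case True
  have "degree (coeff ([:-R, 1:] ^ s) j) = degree (of_nat (s choose j) * (-R) ^ (s - j))"
    using True by (simp add: coeff_linear_poly_power)
  also have "\<dots> \<le> degree ((-R) ^ (s - j))"
    using degree_mult_le[of "of_nat (s choose j)" "(-R) ^ (s - j)"] by (simp add: of_nat_poly)
  also have "\<dots> \<le> (s - j) * degree R"
    using degree_power_le[of "-R" "s - j"] by (simp add: mult.commute)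
  finally show ?thesis .
next
  case False
  then show ?thesis by (simp add: coeff_eq_0 degree_linear_power)
qed

lemma represents_basis_row_nonzero:
  fixes B :: "'a::field poly mat"
  assumes rb: "represents_basis B M" and "0 \<in> M" and i: "i < dim_row B"
  shows "\<exists>j<dim_col B. B $$ (i, j) \<noteq> 0"
proof (rule ccontr)
  let ?comb = "\<lambda>c. \<Sum>t<dim_row B. smult (c $ t) (vec_to_bpoly (row B t))"
  assume "\<not> (\<exists>j<dim_col B. B $$ (i, j) \<noteq> 0)"
  then have "vec_to_bpoly (row B i) = 0"
    unfolding vec_to_bpoly_def using i by (intro sum.neutral) auto
  then have "?comb (unit_vec (dim_row B) i) = 0"
    using i by (intro sum.neutral) (auto simp: unit_vec_def)
  moreover have "?comb (0\<^sub>v (dim_row B)) = 0"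
    by (intro sum.neutral) simp
  moreover have "\<exists>!c. dim_vec c = dim_row B \<and> 0 = ?comb c"
    using rb \<open>0 \<in> M\<close> unfolding represents_basis_def by blast
  moreover have "0\<^sub>v (dim_row B) \<noteq> (unit_vec (dim_row B) i :: 'a poly vec)"
    using i by (metis index_unit_vec(1) index_zero_vec(1) one_neq_zero)
  ultimately show False
    by (metis index_unit_vec(3) index_zero_vec(2))
qed

lemma dim_C_I [simp]: "dim_row (C_I B l s R) = l + 2" "dim_col (C_I B l s R) = l + 2"
  by (simp_all add: C_I_def)

lemma index_C_I_mult_W:
  assumes "i < l + 2" "j < l + 2"
  shows "(C_I B l s R * W_mat k (l+1)) $$ (i, j) = C_I B l s R $$ (i, j) * monom 1 (j * (k - 1))"
proof -
  have "C_I B l s R \<in> carrier_mat (l + 2) (l + 1 + 1)"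
    unfolding carrier_mat_def by simp
  moreover have "j < l + 1 + 1" using assms by simp
  ultimately show ?thesis using index_mult_W_mat assms(1) by blast
qed

lemma index_upper_rows_C_I_mult_W:
  assumes "i \<le> l" "j < l + 2"
  shows "(C_I B l s R * W_mat k (l+1)) $$ (i, j) = (if j \<le> l then B $$ (i, j) else 0) * monom 1 (j * (k - 1))"
  using assms by (subst index_C_I_mult_W) (simp_all add: C_I_def)

lemma index_last_row_C_I_mult_W:
  assumes "j < l + 2"
  shows "(C_I B l s R * W_mat k (l+1)) $$ (l + 1, j)
    = (if j < l - s + 1 then 0 else coeff ([:-R, 1:] ^ s) (j - (l - s + 1))) * monom 1 (j * (k - 1))"
  using assms by (subst index_C_I_mult_W) (simp_all add: C_I_def coeff_vec_def coeff_monom_mult)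

lemma det_C_I_mult_W:
  fixes B :: "'a::comm_ring_1 poly mat"
  assumes B: "B \<in> carrier_mat (l+1) (l+1)" and s: "s \<le> l"
  shows "det (C_I B l s R * W_mat k (l+1)) = monom 1 ((l+1) * (k-1)) * det (B * W_mat k l)"
proof -
  define D where "D = C_I B l s R * W_mat k (l+1)"
  have D: "D \<in> carrier_mat (l+2) (l+2)"
    unfolding D_def carrier_mat_def mem_Collect_eq index_mult_mat dim_C_I dim_W_mat by simp
  have last_col: "D $$ (i, l+1) = 0" if "i \<le> l" for i
    unfolding D_def using that by (subst index_upper_rows_C_I_mult_W) simp_all
  have corner: "D $$ (l+1, l+1) = monom 1 ((l+1) * (k-1))"
    unfolding D_def using s by (subst index_last_row_C_I_mult_W) (simp_all add: coeff_linear_power)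
  have minor: "mat_delete D (l+1) (l+1) = B * W_mat k l"
  proof (rule eq_matI)
    fix i j assume "i < dim_row (B * W_mat k l)" "j < dim_col (B * W_mat k l)"
    then have ij: "i < l+1" "j < l+1" using B by auto
    have "mat_delete D (l+1) (l+1) $$ (i, j) = D $$ (i, j)"
      using ij D by (simp add: mat_delete_def)
    also have "\<dots> = B $$ (i, j) * monom 1 (j * (k-1))"
      unfolding D_def using ij by (subst index_upper_rows_C_I_mult_W) simp_all
    finally show "mat_delete D (l+1) (l+1) $$ (i, j) = (B * W_mat k l) $$ (i, j)"
      using index_mult_W_mat[OF B ij] by simp
  qed (use B D in auto)
  have "det D = (\<Sum>i<l+2. D $$ (i, l+1) * cofactor D i (l+1))"
    by (rule laplace_expansion_column[OF D]) simp
  also have "\<dots> = D $$ (l+1, l+1) * cofactor D (l+1) (l+1)"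
    using last_col by (simp add: lessThan_Suc)
  also have "\<dots> = monom 1 ((l+1) * (k-1)) * det (B * W_mat k l)"
    unfolding corner cofactor_def minor by simp
  finally show ?thesis unfolding D_def .
qed

lemma vdeg_row_C_I_mult_W:
  fixes B :: "'a::comm_ring_1 poly mat"
  assumes B: "B \<in> carrier_mat (l+1) (l+1)" and i: "i \<le> l"
  shows "vdeg (row (C_I B l s R * W_mat k (l+1)) i) = vdeg (row (B * W_mat k l) i)"
proof -
  define D where "D = C_I B l s R * W_mat k (l+1)"
  have dims: "dim_row D = l+2" "dim_col D = l+2" by (simp_all add: D_def)
  have entry: "row D i $ j = (if j \<le> l then B $$ (i, j) else 0) * monom 1 (j * (k-1))"
    if "j < l+2" for j
  proof -
    have "row D i $ j = D $$ (i, j)" using i that dims by simp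
    also have "\<dots> = (if j \<le> l then B $$ (i, j) else 0) * monom 1 (j * (k-1))"
      unfolding D_def using i that by (rule index_upper_rows_C_I_mult_W)
    finally show ?thesis .
  qed
  show ?thesis unfolding D_def[symmetric]
  proof (rule vdeg_extend_zero)
    show "row D i $ j = row (B * W_mat k l) i $ j" if "j < dim_vec (row (B * W_mat k l) i)" for j
      using that B i entry[of j] index_mult_W_mat[OF B, of i j k] by auto
    show "row D i $ j = 0" if "dim_vec (row (B * W_mat k l) i) \<le> j" "j < dim_vec (row D i)" for j
      using that B dims entry[of j] by auto
  qed (use B dims in auto)
qed

text \<open>The row degree of the last row is attained in column l - s + 1, where the entry is
  (-R)^s X^((l-s+1)(k-1)); further right, each factor X^(k-1) gained is paid for by a
  lost factor of degree deg R \<ge> k - 1.\<close>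
lemma vdeg_last_row_C_I_mult_W:
  fixes R :: "'a::idom poly"
  assumes s: "s \<le> l" and R: "R \<noteq> 0" and k: "k - 1 \<le> degree R"
  shows "vdeg (row (C_I B l s R * W_mat k (l+1)) (l+1)) = s * degree R + (l - s + 1) * (k - 1)"
proof -
  define D where "D = C_I B l s R * W_mat k (l+1)"
  define a where "a = l - s + 1"
  have dims: "dim_row D = l+2" "dim_col D = l+2" by (simp_all add: D_def)
  have entry: "row D (l+1) $ j
      = (if j < a then 0 else coeff ([:-R, 1:] ^ s) (j - a)) * monom 1 (j * (k-1))"
    if "j < l+2" for j
  proof -
    have "row D (l+1) $ j = D $$ (l+1, j)" using that dims by simp
    also have "\<dots> = (if j < a then 0 else coeff ([:-R, 1:] ^ s) (j - a)) * monom 1 (j * (k-1))"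
      unfolding D_def a_def by (rule index_last_row_C_I_mult_W[OF that])
    finally show ?thesis .
  qed
  show ?thesis unfolding D_def[symmetric] a_def[symmetric]
  proof (rule vdeg_eqI)
    show "degree (row D (l+1) $ j) \<le> s * degree R + a * (k-1)" if "j < dim_vec (row D (l+1))" for j
    proof (cases "j < a")
      case False
      define t where "t = j - a"
      have j: "j = a + t" "t \<le> s" using False that dims s by (auto simp: t_def a_def)
      have "degree (row D (l+1) $ j) \<le> degree (coeff ([:-R, 1:] ^ s) t) + j * (k-1)"
        using that dims entry[of j] False degree_mult_le[of "coeff ([:-R, 1:] ^ s) t" "monom 1 (j * (k-1))"]
        by (simp add: t_def degree_monom_eq)
      also have "\<dots> \<le> (s - t) * degree R + t * degree R + a * (k-1)"
        using degree_coeff_linear_power_le[of R s t] mult_le_mono2[OF k, of t]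
          add_mult_distrib[of a t "k-1"] unfolding j(1) by linarith
      also have "\<dots> = s * degree R + a * (k-1)"
        using j by (simp add: add_mult_distrib[symmetric])
      finally show ?thesis .
    qed (use that dims entry in simp)
    have "row D (l+1) $ a = (-R) ^ s * monom 1 (a * (k-1))"
      using entry[of a] s by (simp add: a_def coeff_0_power)
    then show "row D (l+1) $ a \<noteq> 0" "degree (row D (l+1) $ a) = s * degree R + a * (k-1)"
      using R by (simp_all add: degree_mult_eq degree_power_eq degree_monom_eq monom_eq_0_iff)
    show "a < dim_vec (row D (l+1))" using dims s by (simp add: a_def)
  qed
qed

lemma mat_deg_C_I_mult_W:
  fixes B :: "'a::idom poly mat"
  assumes B: "B \<in> carrier_mat (l+1) (l+1)" and s: "s \<le> l" and R: "R \<noteq> 0"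
    and k: "k - 1 \<le> degree R"
  shows "mat_deg (C_I B l s R * W_mat k (l+1))
    = mat_deg (B * W_mat k l) + (s * degree R + (l - s + 1) * (k - 1))"
proof -
  have "mat_deg (C_I B l s R * W_mat k (l+1))
      = (\<Sum>i<l+1. vdeg (row (C_I B l s R * W_mat k (l+1)) i))
        + vdeg (row (C_I B l s R * W_mat k (l+1)) (l+1))"
    by (simp add: mat_deg_def)
  also have "(\<Sum>i<l+1. vdeg (row (C_I B l s R * W_mat k (l+1)) i)) = mat_deg (B * W_mat k l)"
    using B vdeg_row_C_I_mult_W[OF B] by (simp add: mat_deg_def)
  finally show ?thesis
    using vdeg_last_row_C_I_mult_W[OF s R k] by simp
qed

lemma Delta_C_I_mult_W:
  fixes B :: "'a::idom poly mat"
  assumes B: "B \<in> carrier_mat (l+1) (l+1)" and s: "s \<le> l" and R: "R \<noteq> 0"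
    and k: "1 \<le> k" "k - 1 \<le> degree R"
    and det: "det (B * W_mat k l) \<noteq> 0" "degree (det (B * W_mat k l)) = mat_deg (B * W_mat k l)"
  shows "Delta (C_I B l s R * W_mat k (l+1)) = int s * (int (degree R) - int k + 1)"
proof -
  obtain c where c: "k = c + 1" using k(1) by (metis le_add_diff_inverse2)
  define a where "a = l - s + 1"
  have la: "l + 1 = a + s" using s by (simp add: a_def)
  have "degree (det (C_I B l s R * W_mat k (l+1))) = (l + 1) * c + mat_deg (B * W_mat k l)"
    using det det_C_I_mult_W[OF B s] c
    by (simp add: degree_mult_eq monom_eq_0_iff degree_monom_eq)
  also have "(l + 1) * c = a * c + s * c"
    unfolding la by (rule add_mult_distrib)
  finally have "degree (det (C_I B l s R * W_mat k (l+1))) = a * c + s * c + mat_deg (B * W_mat k l)" .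
  moreover have "mat_deg (C_I B l s R * W_mat k (l+1)) = mat_deg (B * W_mat k l) + (s * degree R + a * c)"
    using mat_deg_C_I_mult_W[OF B s R k(2)] c by (simp add: a_def)
  ultimately show ?thesis
    using c by (simp add: Delta_def algebra_simps)
qed

lemma zero_in_M_module: "0 \<in> M_module n s l alpha r'"
  by (simp add: M_module_def shift_XY_def no_low_monomials_def)

theorem lemma8:
  fixes alpha w r :: "nat \<Rightarrow> 'a::{field,finite}"
    and n k s l :: nat and R :: "'a poly" and B :: "'a poly mat"
  assumes "1 \<le> k" "k < n" "n < card (UNIV :: 'a set)"
    and "\<forall>i<n. \<forall>j<n. i \<noteq> j \<longrightarrow> alpha i \<noteq> alpha j"
    and "\<forall>i<n. alpha i \<noteq> 0" "\<forall>i<n. w i \<noteq> 0"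
    and "degree R < n" "\<forall>i<n. poly R (alpha i) = r i / w i"
    and "\<not> (\<exists>f. degree f < k \<and> (\<forall>i<n. r i = w i * poly f (alpha i)))"
    and "0 < s" "s \<le> l"
    and "B \<in> carrier_mat (l+1) (l+1)"
    and "represents_basis B (M_module n s l alpha (\<lambda>i. r i / w i))"
    and "weak_popov (B * W_mat k l)"
  shows "Delta (C_I B l s R * W_mat k (l+1)) = int s * (int (degree R) - int k + 1)
       \<and> int s * (int (degree R) - int k + 1) \<le> int s * (int n - int k)"
proof -
  have "k \<le> degree R"
  proof (rule ccontr)
    assume "\<not> k \<le> degree R"
    moreover have "\<forall>i<n. r i = w i * poly R (alpha i)" using assms(6,8) by simp
    ultimately show False using assms(9) by (meson not_le)
  qed
  then have R: "R \<noteq> 0" using assms(1) by auto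
  have rows: "\<exists>j<l+1. (B * W_mat k l) $$ (i, j) \<noteq> 0" if "i < l+1" for i
  proof -
    have "\<exists>j<l+1. B $$ (i, j) \<noteq> 0"
      using represents_basis_row_nonzero[OF assms(13) zero_in_M_module, of i] that
      unfolding carrier_matD[OF assms(12)] .
    then obtain j where "j < l+1" "B $$ (i, j) \<noteq> 0" by blast
    then show ?thesis
      using index_mult_W_mat[OF assms(12) that] by (auto simp: monom_eq_0_iff)
  qed
  have "B * W_mat k l \<in> carrier_mat (l+1) (l+1)"
    using mult_carrier_mat[OF assms(12) W_mat_carrier] .
  note det = degree_det_weak_popov[OF this assms(14) rows]
  have "Delta (C_I B l s R * W_mat k (l+1)) = int s * (int (degree R) - int k + 1)"
    using \<open>k \<le> degree R\<close> by (intro Delta_C_I_mult_W[OF assms(12,11) R assms(1) _ det]) simp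
  moreover have "int s * (int (degree R) - int k + 1) \<le> int s * (int n - int k)"
    using assms(7) by (intro mult_left_mono) auto
  ultimately show ?thesis by simp
qed

end
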